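(* Let $H$ be a real Hilbert space, let $D\subseteq H$ be a nonempty closed convex set, and let $T_1,\dots,T_m:D\to D$ be firmly nonexpansive operators with $F:=\bigcap_{i=1}^m\mathrm{Fix}(T_i)\neq\emptyset$. Let $\mathcal{M}'$ be a finite nonempty subset of $\mathcal{M}$, enumerated as $S_1,\dots,S_N$ with $N=|\mathcal{M}'|$ and $S_r=(\Omega_r,w_r)$, and set $T_{S_r}:=\sum_{t\in\Omega_r}w_r(t)T[t]$. Let $\hat w_1,\dots,\hat w_N$ be strictly positive reals with $\sum_{r=1}^N\hat w_r=1$, let $(\lambda_k)_{k\in\mathbb{N}}$ be a steering sequence, and let $u,x^0\in D$. Then the sequence defined by $$x^{k+1}=\lambda_k u+(1-\lambda_k)\sum_{r=1}^N\hat w_r\,T_{S_r}(x^k),\quad k\ge0,$$ converges strongly to $P_F(u)$.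
   Context: An operator $T:D\to H$ is firmly nonexpansive if $\|T(x)-T(y)\|^2\le\langle x-y,T(x)-T(y)\rangle$ for all $x,y\in D$. $\mathrm{Fix}(T)=\{x\in D: T(x)=x\}$; $P_F$ is the metric projection onto $F$. An index vector is a finite tuple $t=(t_1,\dots,t_q)$ with each $t_\ell\in\{1,\dots,m\}$; the string operator is $T[t]:=T_{t_q}T_{t_{q-1}}\cdots T_{t_1}$. A finite set $\Omega$ of index vectors is fit if every $i\in\{1,\dots,m\}$ appears as a component of some $t\in\Omega$. $\mathcal{M}$ denotes the collection of all pairs $(\Omega,w)$ where $\Omega$ is a fit finite set of index vectors and $w:\Omega\to(0,1]$ satisfies $\sum_{t\in\Omega}w(t)=1$. A steering sequence is a real sequence $(\lambda_k)_{k\in\mathbb{N}}$ with $\lambda_k\in[0,1]$ for all $k$, $\lim_{k\to\infty}\lambda_k=0$, $\sum_{k=0}^\infty\lambda_k=+\infty$, and $\sum_{k=0}^\infty|\lambda_{k+1}-\lambda_k|<\infty$. *)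

theory Defs
  imports "HOL-Analysis.Analysis"
begin

definition firmly_nonexpansive_on :: "'a::real_inner set \<Rightarrow> ('a \<Rightarrow> 'a) \<Rightarrow> bool" where
  "firmly_nonexpansive_on D T \<longleftrightarrow>
     (\<forall>x\<in>D. \<forall>y\<in>D. (norm (T x - T y))\<^sup>2 \<le> inner (x - y) (T x - T y))"

definition Fix :: "'a set \<Rightarrow> ('a \<Rightarrow> 'a) \<Rightarrow> 'a set" where
  "Fix D T = {x \<in> D. T x = x}"

text \<open>Metric projection onto F (the nearest point; unique for closed convex nonempty F
  in a Hilbert space).\<close>
definition metric_proj :: "'a::real_inner set \<Rightarrow> 'a \<Rightarrow> 'a" where
  "metric_proj F u = (SOME p. p \<in> F \<and> (\<forall>y\<in>F. dist u p \<le> dist u y))"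

text \<open>Index vectors are nonempty lists t = [t_1,...,t_q] with entries in {1..m}.
  String operator T[t] = T_{t_q} \<circ> ... \<circ> T_{t_1} (t_1 applied first).\<close>
fun string_op :: "(nat \<Rightarrow> 'a \<Rightarrow> 'a) \<Rightarrow> nat list \<Rightarrow> 'a \<Rightarrow> 'a" where
  "string_op T [] = id"
| "string_op T (i # t) = string_op T t \<circ> T i"

definition index_vector :: "nat \<Rightarrow> nat list \<Rightarrow> bool" where
  "index_vector m t \<longleftrightarrow> t \<noteq> [] \<and> set t \<subseteq> {1..m}"

definition fit :: "nat \<Rightarrow> nat list set \<Rightarrow> bool" where
  "fit m \<Omega> \<longleftrightarrow> finite \<Omega> \<and> (\<forall>t\<in>\<Omega>. index_vector m t) \<and>
     (\<forall>i\<in>{1..m}. \<exists>t\<in>\<Omega>. i \<in> set t)"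

text \<open>Membership of the pair (\<Omega>, w) in the collection \<M>; w is only relevant on \<Omega>.\<close>
definition in_M :: "nat \<Rightarrow> nat list set \<Rightarrow> (nat list \<Rightarrow> real) \<Rightarrow> bool" where
  "in_M m \<Omega> w \<longleftrightarrow> fit m \<Omega> \<and> (\<forall>t\<in>\<Omega>. 0 < w t \<and> w t \<le> 1) \<and> (\<Sum>t\<in>\<Omega>. w t) = 1"

definition T_S :: "(nat \<Rightarrow> 'a::real_vector \<Rightarrow> 'a) \<Rightarrow> nat list set \<Rightarrow> (nat list \<Rightarrow> real) \<Rightarrow> 'a \<Rightarrow> 'a" where
  "T_S T \<Omega> w x = (\<Sum>t\<in>\<Omega>. w t *\<^sub>R string_op T t x)"

definition steering :: "(nat \<Rightarrow> real) \<Rightarrow> bool" where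
  "steering lam \<longleftrightarrow> (\<forall>k. 0 \<le> lam k \<and> lam k \<le> 1) \<and> lam \<longlonglongrightarrow> 0 \<and>
     \<not> summable lam \<and> summable (\<lambda>k. \<bar>lam (Suc k) - lam k\<bar>)"

end

theory Submission
  imports Defs
begin

text \<open>The averaged operator V = \<Sum>r. w(r) T(S(r)) maps D into itself, is nonexpansive, and its
  fixed points are exactly the common fixed points of the T(i): if V y = y and q is a common fixed
  point, then no string operator brings y closer to q, so equality holds in every nonexpansiveness
  estimate, and firm nonexpansiveness forces each factor of each string to fix y.

  The recursion is therefore Halpern's iteration for V.  Its iterates are asymptotically regular,
  and the anchored points z(t) = t u + (1 - t) V z(t) converge to p = P(F) u as t \<rightarrow> 0 (Browder);
  together these give limsup \<langle>u - p, x(k) - p\<rangle> \<le> 0.  Xu's lemma applied to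
  |x(k+1) - p|^2 \<le> (1 - \<lambda>(k)) |x(k) - p|^2 + 2 \<lambda>(k) \<langle>u - p, x(k+1) - p\<rangle> then gives x(k) \<rightarrow> p.\<close>

section \<open>Recursive inequalities\<close>

lemma tail_sums_tendsto_at_top_if_not_summable:
  fixes l :: "nat \<Rightarrow> real"
  assumes nonneg: "\<And>k. 0 \<le> l k" and not_summable: "\<not> summable l"
  shows "filterlim (\<lambda>n. \<Sum>k\<in>{K..<n}. l k) at_top sequentially"
proof (subst filterlim_at_top, intro allI)
  fix Z :: real
  obtain n0 where n0: "Z + (\<Sum>k<K. l k) < (\<Sum>k<n0. l k)"
    using summableI_nonneg_bounded[of l "Z + (\<Sum>k<K. l k)"] nonneg not_summable
    by (meson not_le)
  have "Z \<le> (\<Sum>k\<in>{K..<n}. l k)" if "n0 \<le> n" for n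
  proof -
    have "(\<Sum>k<n0. l k) \<le> (\<Sum>k<n. l k)"
      using that nonneg by (intro sum_mono2) auto
    also have "\<dots> \<le> (\<Sum>k\<in>{..<K} \<union> {K..<n}. l k)"
      using nonneg by (intro sum_mono2) auto
    also have "\<dots> = (\<Sum>k<K. l k) + (\<Sum>k\<in>{K..<n}. l k)"
      by (intro sum.union_disjoint) auto
    finally show ?thesis using n0 by linarith
  qed
  then show "\<forall>\<^sub>F n in sequentially. Z \<le> (\<Sum>k\<in>{K..<n}. l k)"
    by (auto simp: eventually_sequentially)
qed

lemma recursive_inequality_iterate:
  fixes a l g :: "nat \<Rightarrow> real"
  assumes a: "\<And>k. 0 \<le> a k" and l: "\<And>k. 0 \<le> l k \<and> l k \<le> 1" and g: "\<And>k. 0 \<le> g k"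
    and step: "\<And>k. K \<le> k \<Longrightarrow> a (Suc k) \<le> (1 - l k) * a k + g k"
  shows "a (K + d) \<le> exp (- (\<Sum>k\<in>{K..<K+d}. l k)) * a K + (\<Sum>k\<in>{K..<K+d}. g k)"
proof (induction d)
  case 0
  then show ?case by simp
next
  case (Suc d)
  let ?k = "K + d" and ?L = "\<Sum>k\<in>{K..<K+d}. l k" and ?G = "\<Sum>k\<in>{K..<K+d}. g k"
  have "a (K + Suc d) \<le> (1 - l ?k) * a ?k + g ?k"
    using step[of ?k] by simp
  also have "\<dots> \<le> (1 - l ?k) * (exp (- ?L) * a K + ?G) + g ?k"
    using Suc l[of ?k] by (intro add_right_mono mult_left_mono) auto
  also have "\<dots> \<le> exp (- l ?k) * (exp (- ?L) * a K) + ?G + g ?k"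
  proof -
    have "(1 - l ?k) * (exp (- ?L) * a K) \<le> exp (- l ?k) * (exp (- ?L) * a K)"
      by (rule mult_right_mono) (use exp_ge_add_one_self[of "- l ?k"] a[of K] in auto)
    moreover have "(1 - l ?k) * ?G \<le> ?G"
      using l[of ?k] g by (intro mult_left_le_one_le sum_nonneg) auto
    ultimately show ?thesis
      unfolding distrib_left by linarith
  qed
  also have "\<dots> = exp (- (\<Sum>k\<in>{K..<K + Suc d}. l k)) * a K + (\<Sum>k\<in>{K..<K + Suc d}. g k)"
    by (simp add: exp_add[symmetric])
  finally show ?case .
qed

lemma recursive_inequality_tendsto_zero:
  fixes a l b g :: "nat \<Rightarrow> real"
  assumes a: "\<And>k. 0 \<le> a k" and l: "\<And>k. 0 \<le> l k \<and> l k \<le> 1" and not_summable: "\<not> summable l"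
    and g: "\<And>k. 0 \<le> g k" "summable g"
    and b: "\<And>e. e > 0 \<Longrightarrow> eventually (\<lambda>k. b k \<le> e) sequentially"
    and step: "\<And>k. a (Suc k) \<le> (1 - l k) * a k + l k * b k + g k"
  shows "a \<longlonglongrightarrow> 0"
proof (rule LIMSEQ_I)
  fix r :: real
  assume "r > 0"
  define e where "e = r / 3"
  have e: "e > 0" using \<open>r > 0\<close> by (simp add: e_def)
  obtain K1 where K1: "\<And>k. K1 \<le> k \<Longrightarrow> b k \<le> e"
    using b[OF e] by (auto simp: eventually_sequentially)
  obtain K2 where K2: "\<And>m n. K2 \<le> m \<Longrightarrow> norm (\<Sum>k\<in>{m..<n}. g k) < e"
    using g(2) e unfolding summable_Cauchy by blast
  define K where "K = max K1 K2"
  define a' where "a' k = max (a k - e) 0" for k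
  have a'_step: "a' (Suc k) \<le> (1 - l k) * a' k + g k" if "K \<le> k" for k
  proof -
    have "l k * b k \<le> l k * e"
      using K1[of k] that l[of k] by (simp add: K_def mult_left_mono)
    then have "a (Suc k) - e \<le> (1 - l k) * (a k - e) + g k"
      using step[of k] by (simp add: algebra_simps)
    moreover have "(1 - l k) * (a k - e) \<le> (1 - l k) * a' k"
      using l[of k] by (intro mult_left_mono) (auto simp: a'_def)
    moreover have "0 \<le> (1 - l k) * a' k + g k"
      using l[of k] g(1)[of k] by (simp add: a'_def)
    ultimately show ?thesis by (simp add: a'_def)
  qed
  have "(\<lambda>n. exp (- (\<Sum>k\<in>{K..<n}. l k)) * a' K) \<longlonglongrightarrow> 0 * a' K"
    using tail_sums_tendsto_at_top_if_not_summable[of l K] l not_summable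
    by (intro tendsto_mult tendsto_const filterlim_compose[OF exp_at_bot]
        filterlim_compose[OF filterlim_uminus_at_bot_at_top]) auto
  then obtain K3 where K3: "\<And>n. K3 \<le> n \<Longrightarrow> exp (- (\<Sum>k\<in>{K..<n}. l k)) * a' K < e"
    using LIMSEQ_D[OF _ e] by (force simp: abs_less_iff)
  show "\<exists>n0. \<forall>n\<ge>n0. norm (a n - 0) < r"
  proof (intro exI allI impI)
    fix n
    assume n: "max K K3 \<le> n"
    then obtain d where d: "n = K + d" by (metis le_Suc_ex max.boundedE)
    have "a' n \<le> exp (- (\<Sum>k\<in>{K..<n}. l k)) * a' K + (\<Sum>k\<in>{K..<n}. g k)"
      using recursive_inequality_iterate[of a' l g K d] a'_step l g(1) d by (auto simp: a'_def)
    also have "\<dots> < 2 * e"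
      using K3[of n] K2[of K n] n by (auto simp: K_def)
    finally show "norm (a n - 0) < r"
      using a[of n] unfolding a'_def e_def by (simp add: max_def split: if_splits)
  qed
qed

section \<open>Nonexpansive maps and anchored points\<close>

lemma metric_proj_eqI:
  fixes u p :: "'a::real_inner"
  assumes "p \<in> F" and variational: "\<And>q. q \<in> F \<Longrightarrow> inner (u - p) (q - p) \<le> 0"
  shows "metric_proj F u = p"
proof -
  have pythagoras: "(norm (u - p))\<^sup>2 + (norm (q - p))\<^sup>2 \<le> (norm (u - q))\<^sup>2" if "q \<in> F" for q
  proof -
    have "(norm (u - q))\<^sup>2 = (norm ((u - p) - (q - p)))\<^sup>2"
      by simp
    also have "\<dots> = (norm (u - p))\<^sup>2 - 2 * inner (u - p) (q - p) + (norm (q - p))\<^sup>2"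
      unfolding power2_norm_eq_inner by (simp add: inner_diff_left inner_diff_right inner_commute)
    finally show ?thesis
      using variational[OF that] by linarith
  qed
  show ?thesis
    unfolding metric_proj_def
  proof (rule some_equality)
    show "p \<in> F \<and> (\<forall>y\<in>F. dist u p \<le> dist u y)"
    proof (intro conjI ballI)
      fix y
      assume "y \<in> F"
      then have "(norm (u - p))\<^sup>2 \<le> (norm (u - y))\<^sup>2"
        using pythagoras[of y] by (smt (verit) zero_le_power2)
      then show "dist u p \<le> dist u y"
        unfolding dist_norm by (rule power2_le_imp_le) simp
    qed (fact assms(1))
  next
    fix p'
    assume p': "p' \<in> F \<and> (\<forall>y\<in>F. dist u p' \<le> dist u y)"
    then have "(norm (u - p'))\<^sup>2 \<le> (norm (u - p))\<^sup>2"
      using assms(1) by (simp add: dist_norm power_mono)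
    then have "(norm (p' - p))\<^sup>2 \<le> 0"
      using pythagoras[of p'] p' by linarith
    then show "p' = p" by simp
  qed
qed

definition nonexpansive_on :: "'a::real_normed_vector set \<Rightarrow> ('a \<Rightarrow> 'a) \<Rightarrow> bool" where
  "nonexpansive_on D V \<longleftrightarrow> (\<forall>x\<in>D. \<forall>y\<in>D. norm (V x - V y) \<le> norm (x - y))"

lemma nonexpansive_onD:
  "nonexpansive_on D V \<Longrightarrow> x \<in> D \<Longrightarrow> y \<in> D \<Longrightarrow> norm (V x - V y) \<le> norm (x - y)"
  unfolding nonexpansive_on_def by blast

lemma le_if_square_le_mult:
  fixes a b :: real
  assumes "0 \<le> a" "0 \<le> b" "a\<^sup>2 \<le> b * a"
  shows "a \<le> b"
  using assms by (cases "a = 0") (auto simp: power2_eq_square intro: mult_right_le_imp_le)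

lemma nonexpansive_on_convex_combination:
  fixes f :: "'b \<Rightarrow> 'a::real_normed_vector \<Rightarrow> 'a"
  assumes c: "\<And>j. j \<in> A \<Longrightarrow> 0 \<le> c j" "sum c A = 1"
    and f: "\<And>j. j \<in> A \<Longrightarrow> nonexpansive_on D (f j)"
  shows "nonexpansive_on D (\<lambda>y. \<Sum>j\<in>A. c j *\<^sub>R f j y)"
  unfolding nonexpansive_on_def
proof (intro ballI)
  fix y z
  assume "y \<in> D" "z \<in> D"
  have "norm ((\<Sum>j\<in>A. c j *\<^sub>R f j y) - (\<Sum>j\<in>A. c j *\<^sub>R f j z))
      = norm (\<Sum>j\<in>A. c j *\<^sub>R (f j y - f j z))"
    by (simp add: scaleR_diff_right sum_subtractf)
  also have "\<dots> \<le> (\<Sum>j\<in>A. c j * norm (f j y - f j z))"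
    using norm_sum[of "\<lambda>j. c j *\<^sub>R (f j y - f j z)" A] c(1) by simp
  also have "\<dots> \<le> (\<Sum>j\<in>A. c j * norm (y - z))"
    using c(1) f \<open>y \<in> D\<close> \<open>z \<in> D\<close> by (intro sum_mono mult_left_mono) (auto dest: nonexpansive_onD)
  also have "\<dots> = norm (y - z)"
    using c(2) by (simp add: sum_distrib_right[symmetric])
  finally show "norm ((\<Sum>j\<in>A. c j *\<^sub>R f j y) - (\<Sum>j\<in>A. c j *\<^sub>R f j z)) \<le> norm (y - z)" .
qed

lemma nonexpansive_imp_inner_displacement_nonneg:
  fixes V :: "'a::real_inner \<Rightarrow> 'a"
  assumes "norm (V x - V y) \<le> norm (x - y)"
  shows "0 \<le> inner ((x - V x) - (y - V y)) (x - y)"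
proof -
  have "inner (V x - V y) (x - y) \<le> norm (x - y) * norm (x - y)"
    using norm_cauchy_schwarz[of "V x - V y" "x - y"] mult_right_mono[OF assms norm_ge_zero[of "x - y"]]
    by linarith
  moreover have "inner ((x - V x) - (y - V y)) (x - y) = inner (x - y) (x - y) - inner (V x - V y) (x - y)"
    by (simp add: inner_diff_left algebra_simps)
  ultimately show ?thesis
    by (simp add: power2_norm_eq_inner[symmetric] power2_eq_square)
qed

lemma anchored_point_displacement:
  fixes V :: "'a::real_vector \<Rightarrow> 'a"
  assumes "z = t *\<^sub>R u + (1 - t) *\<^sub>R V z"
  shows "(1 - t) *\<^sub>R (z - V z) = t *\<^sub>R (u - z)"
proof -
  have "(1 - t) *\<^sub>R V z = z - t *\<^sub>R u"
    using assms by (simp add: algebra_simps)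
  then show ?thesis
    by (simp add: algebra_simps)
qed

lemma anchored_point_inner_le:
  fixes V :: "'a::real_inner \<Rightarrow> 'a"
  assumes t: "0 \<le> t" "t \<le> 1" and z: "z = t *\<^sub>R u + (1 - t) *\<^sub>R V z"
    and ne: "norm (V z - V y) \<le> norm (z - y)"
  shows "t * inner (u - z) (y - z) \<le> norm (y - V y) * norm (z - y)"
proof -
  have "(1 - t) * inner (z - V z) (z - y) = t * inner (u - z) (z - y)"
    using arg_cong[OF anchored_point_displacement[where V = V, OF z], of "\<lambda>v. inner v (z - y)"] by simp
  moreover have "0 \<le> (1 - t) * inner ((z - V z) - (y - V y)) (z - y)"
    using t nonexpansive_imp_inner_displacement_nonneg[OF ne] by simp
  ultimately have "- t * inner (u - z) (z - y) \<le> (1 - t) * - inner (y - V y) (z - y)"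
    by (simp add: inner_diff_left algebra_simps)
  also have "\<dots> \<le> (1 - t) * (norm (y - V y) * norm (z - y))"
    using t Cauchy_Schwarz_ineq2[of "y - V y" "z - y"] by (intro mult_left_mono) auto
  also have "\<dots> \<le> norm (y - V y) * norm (z - y)"
    using t by (intro mult_left_le_one_le) auto
  finally show ?thesis
    by (simp add: inner_diff_right algebra_simps)
qed

corollary anchored_point_sq_dist_le_inner:
  fixes V :: "'a::real_inner \<Rightarrow> 'a"
  assumes t: "0 < t" "t \<le> 1" and z: "z = t *\<^sub>R u + (1 - t) *\<^sub>R V z"
    and q: "V q = q" and ne: "norm (V z - V q) \<le> norm (z - q)"
  shows "(norm (z - q))\<^sup>2 \<le> inner (u - q) (z - q)"
proof -
  have "t * inner (u - z) (q - z) \<le> 0"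
    using anchored_point_inner_le[OF less_imp_le[OF t(1)] t(2) z ne] q by simp
  then have "inner (u - z) (q - z) \<le> 0"
    using t(1) by (simp add: mult_le_0_iff)
  moreover have "inner (u - q) (z - q) = (norm (z - q))\<^sup>2 - inner (u - z) (q - z)"
    unfolding power2_norm_eq_inner by (simp add: inner_diff_left inner_diff_right inner_commute)
  ultimately show ?thesis
    by linarith
qed

lemma anchored_points_sq_dist_le:
  fixes V :: "'a::real_inner \<Rightarrow> 'a"
  assumes st: "0 \<le> s" "s < t" "t \<le> 1"
    and zs: "zs = s *\<^sub>R u + (1 - s) *\<^sub>R V zs" and zt: "zt = t *\<^sub>R u + (1 - t) *\<^sub>R V zt"
    and ne: "norm (V zs - V zt) \<le> norm (zs - zt)"
  shows "(norm (zs - zt))\<^sup>2 \<le> (norm (zs - u))\<^sup>2 - (norm (zt - u))\<^sup>2"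
proof -
  define A B where "A = zs - u" and "B = zt - u"
  have "((1 - s) * (1 - t)) *\<^sub>R ((zs - V zs) - (zt - V zt))
      = (1 - t) *\<^sub>R ((1 - s) *\<^sub>R (zs - V zs)) - (1 - s) *\<^sub>R ((1 - t) *\<^sub>R (zt - V zt))"
    by (simp add: algebra_simps)
  also have "\<dots> = (t * (1 - s)) *\<^sub>R B - (s * (1 - t)) *\<^sub>R A"
    unfolding anchored_point_displacement[where V = V, OF zs] anchored_point_displacement[where V = V, OF zt] A_def B_def
    by (simp add: algebra_simps)
  finally have scaled: "((1 - s) * (1 - t)) *\<^sub>R ((zs - V zs) - (zt - V zt))
      = (t * (1 - s)) *\<^sub>R B - (s * (1 - t)) *\<^sub>R A" .
  have "0 \<le> ((1 - s) * (1 - t)) * inner ((zs - V zs) - (zt - V zt)) (zs - zt)"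
    using st nonexpansive_imp_inner_displacement_nonneg[OF ne] by simp
  also have "\<dots> = inner ((t * (1 - s)) *\<^sub>R B - (s * (1 - t)) *\<^sub>R A) (A - B)"
    unfolding scaled[symmetric] by (simp add: A_def B_def)
  also have "\<dots> = (t - s) * inner B (A - B) - s * (1 - t) * inner (A - B) (A - B)"
    by (simp add: inner_diff_left inner_diff_right inner_commute algebra_simps)
  finally have "s * (1 - t) * inner (A - B) (A - B) \<le> (t - s) * inner B (A - B)"
    by simp
  moreover have "0 \<le> s * (1 - t) * inner (A - B) (A - B)"
    using st by (intro mult_nonneg_nonneg) auto
  ultimately have "0 \<le> (t - s) * inner B (A - B)"
    by linarith
  then have "0 \<le> inner B (A - B)"
    using st(2) by (simp add: zero_le_mult_iff)
  moreover have "(norm (zs - u))\<^sup>2 = (norm (zs - zt))\<^sup>2 + 2 * inner B (A - B) + (norm (zt - u))\<^sup>2"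
    unfolding power2_norm_eq_inner A_def B_def
    by (simp add: inner_diff_left inner_diff_right inner_commute algebra_simps)
  ultimately show ?thesis
    by linarith
qed

lemma anchored_path_limit_fixed:
  fixes V :: "'a::real_normed_vector \<Rightarrow> 'a"
  assumes c: "\<And>n. c n = t n *\<^sub>R u + (1 - t n) *\<^sub>R V (c n)"
    and lim: "t \<longlonglongrightarrow> 0" "c \<longlonglongrightarrow> p" "(\<lambda>n. V (c n)) \<longlonglongrightarrow> V p"
  shows "V p = p"
proof -
  have "(\<lambda>n. (1 - t n) *\<^sub>R (c n - V (c n))) \<longlonglongrightarrow> (1 - 0) *\<^sub>R (p - V p)"
    using lim by (intro tendsto_intros)
  moreover have "(1 - t n) *\<^sub>R (c n - V (c n)) = t n *\<^sub>R (u - c n)" for n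
    by (rule anchored_point_displacement[where V = V]) (rule c)
  moreover have "(\<lambda>n. t n *\<^sub>R (u - c n)) \<longlonglongrightarrow> 0 *\<^sub>R (u - p)"
    using lim by (intro tendsto_intros)
  ultimately have "p - V p = 0"
    using LIMSEQ_unique by force
  then show ?thesis
    by simp
qed

lemma Cauchy_if_sq_dist_le_increments:
  fixes c :: "nat \<Rightarrow> 'a::real_normed_vector" and g :: "nat \<Rightarrow> real"
  assumes incr: "\<And>m n. n \<le> m \<Longrightarrow> (norm (c m - c n))\<^sup>2 \<le> g m - g n" and bounded: "\<And>n. g n \<le> B"
  shows "Cauchy c"
proof (rule metric_CauchyI)
  fix e :: real
  assume "0 < e"
  have "g n \<le> g (Suc n)" for n
  proof -
    have "(norm (c (Suc n) - c n))\<^sup>2 \<le> g (Suc n) - g n"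
      by (rule incr) simp
    then show ?thesis
      using zero_le_power2[of "norm (c (Suc n) - c n)"] by linarith
  qed
  then have "incseq g"
    by (rule incseq_SucI)
  then obtain L where "g \<longlonglongrightarrow> L"
    using incseq_convergent bounded by metis
  moreover have "0 < e\<^sup>2"
    using \<open>0 < e\<close> by simp
  ultimately obtain M where M: "\<And>m n. M \<le> m \<Longrightarrow> M \<le> n \<Longrightarrow> dist (g m) (g n) < e\<^sup>2"
    using metric_CauchyD[OF LIMSEQ_imp_Cauchy] by blast
  have sq: "(dist (c m) (c n))\<^sup>2 \<le> dist (g m) (g n)" for m n
  proof (cases "n \<le> m")
    case True
    then show ?thesis
      using incr[OF True] by (simp add: dist_norm dist_real_def)
  next
    case False
    then show ?thesis
      using incr[of m n] by (simp add: dist_norm dist_real_def norm_minus_commute)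
  qed
  have "dist (c m) (c n) < e" if "M \<le> m" "M \<le> n" for m n
    using sq[of m n] M[OF that] power_mono[of e "dist (c m) (c n)" 2] \<open>0 < e\<close>
    by (smt (verit))
  then show "\<exists>M. \<forall>m\<ge>M. \<forall>n\<ge>M. dist (c m) (c n) < e"
    by blast
qed

section \<open>Halpern's iteration\<close>

lemma halpern_step_sq_dist_le:
  fixes u w p :: "'a::real_inner"
  assumes "0 \<le> l" "l \<le> 1"
  defines "y \<equiv> l *\<^sub>R u + (1 - l) *\<^sub>R w"
  shows "(norm (y - p))\<^sup>2 \<le> (1 - l) * (norm (w - p))\<^sup>2 + l * (2 * inner (u - p) (y - p))"
proof -
  define a b where "a = l *\<^sub>R (u - p)" and "b = (1 - l) *\<^sub>R (w - p)"
  have "y - p = a + b"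
    unfolding y_def a_def b_def by (simp add: algebra_simps)
  then have "(norm (y - p))\<^sup>2 = (norm b)\<^sup>2 + 2 * inner a (y - p) - (norm a)\<^sup>2"
    unfolding power2_norm_eq_inner by (simp add: inner_add_left inner_add_right inner_commute)
  also have "\<dots> \<le> (norm b)\<^sup>2 + l * (2 * inner (u - p) (y - p))"
    by (simp add: a_def)
  also have "(norm b)\<^sup>2 = (1 - l) * ((1 - l) * (norm (w - p))\<^sup>2)"
    using assms(1,2) by (simp add: b_def power2_eq_square)
  also have "\<dots> \<le> (1 - l) * (norm (w - p))\<^sup>2"
    using assms(1,2) by (intro mult_left_le_one_le) auto
  finally show ?thesis
    by simp
qed

lemma inner_shift_le:
  fixes u p c y :: "'a::real_inner"
  shows "inner (u - p) (y - p) \<le> inner (u - c) (y - c) + norm (p - c) * (norm (u - p) + norm (y - p))"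
proof -
  have "inner (u - c) (y - c) = inner ((u - p) + (p - c)) ((y - p) + (p - c))"
    by simp
  also have "\<dots> = inner (u - p) (y - p) + inner (u - p) (p - c) + inner (p - c) (y - p) + inner (p - c) (p - c)"
    by (simp only: inner_add_left inner_add_right)
  finally show ?thesis
    using Cauchy_Schwarz_ineq2[of "u - p" "p - c"] Cauchy_Schwarz_ineq2[of "p - c" "y - p"]
      inner_ge_zero[of "p - c"] by (simp add: algebra_simps abs_le_iff)
qed

locale nonexpansive_self_map =
  fixes D :: "'a::{real_inner,complete_space} set" and V :: "'a \<Rightarrow> 'a"
  assumes closed: "closed D" and convex: "convex D" and maps_into: "V ` D \<subseteq> D"
    and nonexpansive: "nonexpansive_on D V" and Fix_nonempty: "Fix D V \<noteq> {}"
begin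

lemma dist_fixed_point_le: "y \<in> D \<Longrightarrow> q \<in> Fix D V \<Longrightarrow> norm (V y - q) \<le> norm (y - q)"
  using nonexpansive_onD[OF nonexpansive, of y q] unfolding Fix_def by simp

lemma tendsto_V:
  assumes "\<And>n. c n \<in> D" "p \<in> D" "c \<longlonglongrightarrow> p"
  shows "(\<lambda>n. V (c n)) \<longlonglongrightarrow> V p"
proof -
  have "(\<lambda>n. V (c n) - V p) \<longlonglongrightarrow> 0"
  proof (rule Lim_null_comparison)
    show "\<forall>\<^sub>F n in sequentially. norm (V (c n) - V p) \<le> norm (c n - p)"
      using assms(1,2) nonexpansive_onD[OF nonexpansive] by simp
    show "(\<lambda>n. norm (c n - p)) \<longlonglongrightarrow> 0"
      using assms(3) by (simp add: tendsto_norm_zero_iff LIM_zero)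
  qed
  then show ?thesis
    by (simp add: LIM_zero_iff)
qed

lemma anchored_point_exists:
  assumes "u \<in> D" "0 < t" "t \<le> 1"
  shows "\<exists>z\<in>D. z = t *\<^sub>R u + (1 - t) *\<^sub>R V z"
proof -
  let ?f = "\<lambda>z. t *\<^sub>R u + (1 - t) *\<^sub>R V z"
  have "\<exists>!z. z \<in> D \<and> ?f z = z"
  proof (rule Banach_fix[where c = "1 - t"])
    show "complete D"
      using closed by (simp add: complete_eq_closed)
    show "D \<noteq> {}"
      using Fix_nonempty unfolding Fix_def by blast
    show "0 \<le> 1 - t" "1 - t < 1"
      using assms by auto
    show "?f ` D \<subseteq> D"
      using assms maps_into by (auto intro!: convexD[OF convex])
    fix y z
    assume "y \<in> D" "z \<in> D"
    have "dist (?f y) (?f z) = (1 - t) * norm (V y - V z)"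
      using assms by (simp add: dist_norm flip: scaleR_diff_right)
    also have "\<dots> \<le> (1 - t) * dist y z"
      using assms nonexpansive_onD[OF nonexpansive \<open>y \<in> D\<close> \<open>z \<in> D\<close>]
      by (simp add: dist_norm mult_left_mono)
    finally show "dist (?f y) (?f z) \<le> (1 - t) * dist y z" .
  qed
  then show ?thesis
    by metis
qed

text \<open>Monotonicity of the distance to the anchor along the path replaces the weak compactness
  argument of the usual proof of Browder's theorem.\<close>

theorem browder_path_tendsto_metric_proj:
  assumes u: "u \<in> D"
    and t: "\<And>n. 0 < t n" "\<And>n. t n \<le> 1" "\<And>m n. n < m \<Longrightarrow> t m < t n" "t \<longlonglongrightarrow> 0"
    and c: "\<And>n. c n \<in> D" "\<And>n. c n = t n *\<^sub>R u + (1 - t n) *\<^sub>R V (c n)"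
  shows "metric_proj (Fix D V) u \<in> Fix D V" "c \<longlonglongrightarrow> metric_proj (Fix D V) u"
proof -
  have anchor: "(norm (c n - q))\<^sup>2 \<le> inner (u - q) (c n - q)" if "q \<in> Fix D V" for n q
    using that c(1) dist_fixed_point_le[OF c(1) that] unfolding Fix_def
    by (intro anchored_point_sq_dist_le_inner[where V = V, OF t(1,2) c(2)]) auto
  obtain q0 where q0: "q0 \<in> Fix D V"
    using Fix_nonempty by blast
  have "norm (c n - u) \<le> 2 * norm (u - q0)" for n
  proof -
    have "(norm (c n - q0))\<^sup>2 \<le> norm (u - q0) * norm (c n - q0)"
      using anchor[OF q0, of n] norm_cauchy_schwarz[of "u - q0" "c n - q0"] by linarith
    then have "norm (c n - q0) \<le> norm (u - q0)"
      by (rule le_if_square_le_mult[OF norm_ge_zero norm_ge_zero])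
    then show ?thesis
      using norm_triangle_ineq4[of "c n - q0" "u - q0"] by simp
  qed
  then have "(norm (c n - u))\<^sup>2 \<le> (2 * norm (u - q0))\<^sup>2" for n
    by (intro power_mono) auto
  moreover have "(norm (c m - c n))\<^sup>2 \<le> (norm (c m - u))\<^sup>2 - (norm (c n - u))\<^sup>2" if "n \<le> m" for m n
  proof (cases "n = m")
    case False
    with that have "t m < t n"
      using t(3) by simp
    then show ?thesis
      using t(1,2) c nonexpansive_onD[OF nonexpansive]
      by (intro anchored_points_sq_dist_le[where V = V]) (auto intro: less_imp_le)
  qed simp
  ultimately have "Cauchy c"
    by (intro Cauchy_if_sq_dist_le_increments[where g = "\<lambda>n. (norm (c n - u))\<^sup>2"])
  then obtain p where cp: "c \<longlonglongrightarrow> p"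
    using Cauchy_convergent_iff convergent_def by blast
  have "p \<in> D"
    using closed c(1) cp closed_sequentially by blast
  then have p: "p \<in> Fix D V"
    using anchored_path_limit_fixed[where V = V, OF c(2) t(4) cp tendsto_V[OF c(1) _ cp]]
    unfolding Fix_def by simp
  have "inner (u - p) (q - p) \<le> 0" if "q \<in> Fix D V" for q
  proof -
    have "(norm (p - q))\<^sup>2 \<le> inner (u - q) (p - q)"
    proof (rule LIMSEQ_le)
      show "(\<lambda>n. (norm (c n - q))\<^sup>2) \<longlonglongrightarrow> (norm (p - q))\<^sup>2"
        "(\<lambda>n. inner (u - q) (c n - q)) \<longlonglongrightarrow> inner (u - q) (p - q)"
        using cp by (auto intro!: tendsto_intros)
    qed (use anchor[OF that] in auto)
    moreover have "inner (u - p) (q - p) = (norm (p - q))\<^sup>2 - inner (u - q) (p - q)"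
      unfolding power2_norm_eq_inner by (simp add: inner_diff_left inner_diff_right inner_commute)
    ultimately show ?thesis
      by linarith
  qed
  then have "metric_proj (Fix D V) u = p"
    by (rule metric_proj_eqI[OF p])
  then show "metric_proj (Fix D V) u \<in> Fix D V" "c \<longlonglongrightarrow> metric_proj (Fix D V) u"
    using p cp by simp_all
qed

end

locale halpern_iteration = nonexpansive_self_map +
  fixes u :: "'a::{real_inner,complete_space}" and lam :: "nat \<Rightarrow> real" and x :: "nat \<Rightarrow> 'a"
  assumes anchor_in: "u \<in> D" and start_in: "x 0 \<in> D" and steering: "steering lam"
    and iteration: "\<And>k. x (Suc k) = lam k *\<^sub>R u + (1 - lam k) *\<^sub>R V (x k)"
begin

lemma lam_bounds: "0 \<le> lam k \<and> lam k \<le> 1"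
  using steering unfolding steering_def by blast

lemma iterate_in: "x k \<in> D"
proof (induction k)
  case 0
  then show ?case by (rule start_in)
next
  case (Suc k)
  then show ?case
    unfolding iteration using lam_bounds[of k] anchor_in maps_into
    by (intro convexD[OF convex]) auto
qed

lemma iterate_dist_fixed_point_le:
  assumes "q \<in> Fix D V"
  shows "norm (x k - q) \<le> max (norm (u - q)) (norm (x 0 - q))"
proof (induction k)
  case 0
  then show ?case by simp
next
  case (Suc k)
  have "x (Suc k) - q = lam k *\<^sub>R (u - q) + (1 - lam k) *\<^sub>R (V (x k) - q)"
    unfolding iteration by (simp add: algebra_simps)
  then have "norm (x (Suc k) - q) \<le> lam k * norm (u - q) + (1 - lam k) * norm (V (x k) - q)"
    using norm_triangle_ineq[of "lam k *\<^sub>R (u - q)" "(1 - lam k) *\<^sub>R (V (x k) - q)"] lam_bounds[of k]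
    by simp
  also have "\<dots> \<le> lam k * max (norm (u - q)) (norm (x 0 - q))
      + (1 - lam k) * max (norm (u - q)) (norm (x 0 - q))"
    using lam_bounds[of k] Suc dist_fixed_point_le[OF iterate_in assms, of k]
    by (intro add_mono mult_left_mono) auto
  finally show ?case
    by (simp add: algebra_simps)
qed

lemma bounded_iterates: "bounded (range x)"
proof -
  obtain q where q: "q \<in> Fix D V"
    using Fix_nonempty by blast
  have "norm (x k) \<le> norm q + max (norm (u - q)) (norm (x 0 - q))" for k
    using iterate_dist_fixed_point_le[OF q, of k] norm_triangle_ineq[of "x k - q" q] by simp
  then show ?thesis
    unfolding bounded_iff by blast
qed

lemma iterate_step_tendsto_zero: "(\<lambda>k. norm (x (Suc k) - x k)) \<longlonglongrightarrow> 0"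
proof -
  obtain q where q: "q \<in> Fix D V"
    using Fix_nonempty by blast
  define M where "M = 2 * max (norm (u - q)) (norm (x 0 - q))"
  have M: "norm (u - V (x k)) \<le> M" for k
    using norm_triangle_ineq4[of "u - q" "V (x k) - q"] dist_fixed_point_le[OF iterate_in q, of k]
      iterate_dist_fixed_point_le[OF q, of k] by (simp add: M_def)
  have "0 \<le> M"
    by (simp add: M_def le_max_iff_disj)
  show ?thesis
  proof (rule recursive_inequality_tendsto_zero[where l = "\<lambda>k. lam (Suc k)" and b = "\<lambda>_. 0"
        and g = "\<lambda>k. M * \<bar>lam (Suc k) - lam k\<bar>"])
    show "\<not> summable (\<lambda>k. lam (Suc k))" "summable (\<lambda>k. M * \<bar>lam (Suc k) - lam k\<bar>)"
      using steering unfolding steering_def by (simp_all add: summable_Suc_iff)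
    show "0 \<le> M * \<bar>lam (Suc k) - lam k\<bar>" for k
      using \<open>0 \<le> M\<close> by simp
    fix k
    have "x (Suc (Suc k)) - x (Suc k)
        = (lam (Suc k) *\<^sub>R u + (1 - lam (Suc k)) *\<^sub>R V (x (Suc k))) - (lam k *\<^sub>R u + (1 - lam k) *\<^sub>R V (x k))"
      by (metis iteration)
    also have "\<dots>
        = (lam (Suc k) - lam k) *\<^sub>R (u - V (x k)) + (1 - lam (Suc k)) *\<^sub>R (V (x (Suc k)) - V (x k))"
      by (simp add: algebra_simps)
    finally have "norm (x (Suc (Suc k)) - x (Suc k))
        \<le> norm ((lam (Suc k) - lam k) *\<^sub>R (u - V (x k)))
          + norm ((1 - lam (Suc k)) *\<^sub>R (V (x (Suc k)) - V (x k)))"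
      by (metis norm_triangle_ineq)
    also have "\<dots> = \<bar>lam (Suc k) - lam k\<bar> * norm (u - V (x k))
        + (1 - lam (Suc k)) * norm (V (x (Suc k)) - V (x k))"
      using lam_bounds[of "Suc k"] by simp
    also have "\<dots> \<le> \<bar>lam (Suc k) - lam k\<bar> * M + (1 - lam (Suc k)) * norm (x (Suc k) - x k)"
      using M[of k] lam_bounds[of "Suc k"] nonexpansive_onD[OF nonexpansive iterate_in iterate_in]
      by (intro add_mono mult_left_mono) auto
    finally show "norm (x (Suc (Suc k)) - x (Suc k))
        \<le> (1 - lam (Suc k)) * norm (x (Suc k) - x k) + lam (Suc k) * 0 + M * \<bar>lam (Suc k) - lam k\<bar>"
      by (simp add: algebra_simps)
  qed (use lam_bounds in auto)
qed

lemma asymptotic_regularity: "(\<lambda>k. x k - V (x k)) \<longlonglongrightarrow> 0"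
proof -
  obtain q where q: "q \<in> Fix D V"
    using Fix_nonempty by blast
  define M where "M = 2 * max (norm (u - q)) (norm (x 0 - q))"
  have bound: "norm (x k - V (x k)) \<le> norm (x (Suc k) - x k) + lam k * M" for k
  proof -
    have "x k - V (x k) = (x k - x (Suc k)) + lam k *\<^sub>R (u - V (x k))"
      using iteration[of k] by (simp add: algebra_simps)
    then have "norm (x k - V (x k)) \<le> norm (x k - x (Suc k)) + norm (lam k *\<^sub>R (u - V (x k)))"
      by (metis norm_triangle_ineq)
    moreover have "norm (u - V (x k)) \<le> M"
      using norm_triangle_ineq4[of "u - q" "V (x k) - q"] dist_fixed_point_le[OF iterate_in q, of k]
        iterate_dist_fixed_point_le[OF q, of k] by (simp add: M_def)
    then have "norm (lam k *\<^sub>R (u - V (x k))) \<le> lam k * M"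
      using lam_bounds[of k] by (simp add: mult_left_mono)
    ultimately show ?thesis
      using norm_minus_commute[of "x k" "x (Suc k)"] by linarith
  qed
  have "lam \<longlonglongrightarrow> 0"
    using steering unfolding steering_def by blast
  show ?thesis
  proof (rule Lim_null_comparison)
    show "\<forall>\<^sub>F k in sequentially. norm (x k - V (x k)) \<le> norm (x (Suc k) - x k) + lam k * M"
      using bound by simp
    show "(\<lambda>k. norm (x (Suc k) - x k) + lam k * M) \<longlonglongrightarrow> 0"
      using iterate_step_tendsto_zero \<open>lam \<longlonglongrightarrow> 0\<close> by (intro tendsto_add_zero tendsto_mult_left_zero)
  qed
qed

text \<open>The anchored points c n, which converge to p, turn the asymptotic regularity of the
  iterates into the bound limsup \<open>\<langle>u - p, x k - p\<rangle> \<le> 0\<close>.\<close>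

lemma limsup_inner_le:
  assumes t: "\<And>n. 0 < t n" "\<And>n. t n \<le> 1"
    and c: "\<And>n. c n \<in> D" "\<And>n. c n = t n *\<^sub>R u + (1 - t n) *\<^sub>R V (c n)"
    and cp: "c \<longlonglongrightarrow> p" and e: "0 < e"
  shows "\<forall>\<^sub>F k in sequentially. inner (u - p) (x k - p) \<le> e"
proof -
  obtain B where B: "\<And>k. norm (x k - p) \<le> B"
    using bounded_iterates bounded_any_center[of "range x" p]
    by (auto simp: dist_norm norm_minus_commute)
  define L where "L = norm (u - p) + B + 1"
  have "0 < L"
    using B[of 0] norm_ge_zero[of "u - p"] norm_ge_zero[of "x 0 - p"] unfolding L_def by linarith
  define \<delta> where "\<delta> = min 1 (e / (2 * L))"
  have "0 < \<delta>"
    using e \<open>0 < L\<close> by (simp add: \<delta>_def)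
  obtain n where n: "norm (c n - p) < \<delta>"
    using LIMSEQ_D[OF cp \<open>0 < \<delta>\<close>] by blast
  have "0 < t n * e / (2 * L)"
    using t(1) e \<open>0 < L\<close> by simp
  then obtain K where K: "\<And>k. K \<le> k \<Longrightarrow> norm (x k - V (x k)) < t n * e / (2 * L)"
    using LIMSEQ_D[OF asymptotic_regularity] by (metis diff_zero)
  have "inner (u - p) (x k - p) \<le> e" if "K \<le> k" for k
  proof -
    have "\<delta> \<le> 1"
      by (simp add: \<delta>_def)
    moreover have "norm (c n - x k) \<le> norm (c n - p) + norm (x k - p)"
      using norm_triangle_ineq4[of "c n - p" "x k - p"] by simp
    ultimately have "norm (c n - x k) \<le> L"
      using n B[of k] norm_ge_zero[of "u - p"] unfolding L_def by linarith
    have "t n * inner (u - c n) (x k - c n) \<le> norm (x k - V (x k)) * norm (c n - x k)"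
      using nonexpansive_onD[OF nonexpansive c(1) iterate_in]
      by (intro anchored_point_inner_le[where V = V, OF less_imp_le[OF t(1)] t(2) c(2)])
    also have "\<dots> \<le> (t n * e / (2 * L)) * L"
      using mult_mono[OF less_imp_le[OF K[OF that]] \<open>norm (c n - x k) \<le> L\<close>]
        \<open>0 < t n * e / (2 * L)\<close> by simp
    also have "\<dots> = t n * (e / 2)"
      using \<open>0 < L\<close> by simp
    finally have "inner (u - c n) (x k - c n) \<le> e / 2"
      using t(1)[of n] by simp
    moreover have "norm (p - c n) * (norm (u - p) + norm (x k - p)) \<le> e / 2"
    proof -
      have "norm (p - c n) \<le> e / (2 * L)"
        using n by (simp add: \<delta>_def norm_minus_commute)
      moreover have "norm (u - p) + norm (x k - p) \<le> L"
        using B[of k] by (simp add: L_def)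
      ultimately have "norm (p - c n) * (norm (u - p) + norm (x k - p)) \<le> (e / (2 * L)) * L"
        by (rule mult_mono) (use e \<open>0 < L\<close> in auto)
      then show ?thesis
        using \<open>0 < L\<close> by simp
    qed
    ultimately show ?thesis
      using inner_shift_le[of u p "x k" "c n"] by linarith
  qed
  then show ?thesis
    by (auto simp: eventually_sequentially)
qed

theorem tendsto_metric_proj: "x \<longlonglongrightarrow> metric_proj (Fix D V) u"
proof -
  define t where "t n = inverse (real (Suc (Suc n)))" for n
  have t: "0 < t n" "t n \<le> 1" for n
    by (auto simp: t_def inverse_le_1_iff)
  have t_decreasing: "t m < t n" if "n < m" for m n
    using that by (simp add: t_def)
  have "t \<longlonglongrightarrow> 0"
    unfolding t_def by (rule LIMSEQ_Suc[OF LIMSEQ_inverse_real_of_nat])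
  obtain c where c: "\<And>n. c n \<in> D" "\<And>n. c n = t n *\<^sub>R u + (1 - t n) *\<^sub>R V (c n)"
    using anchored_point_exists[OF anchor_in t] by metis
  define p where "p = metric_proj (Fix D V) u"
  have p: "p \<in> Fix D V" "c \<longlonglongrightarrow> p"
    using browder_path_tendsto_metric_proj[OF anchor_in t t_decreasing \<open>t \<longlonglongrightarrow> 0\<close> c]
    by (simp_all add: p_def)
  have "(\<lambda>k. (norm (x k - p))\<^sup>2) \<longlonglongrightarrow> 0"
  proof (rule recursive_inequality_tendsto_zero[where l = lam and g = "\<lambda>_. 0"
        and b = "\<lambda>k. 2 * inner (u - p) (x (Suc k) - p)"])
    fix k
    have "(norm (x (Suc k) - p))\<^sup>2
        \<le> (1 - lam k) * (norm (V (x k) - p))\<^sup>2 + lam k * (2 * inner (u - p) (x (Suc k) - p))"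
      unfolding iteration using lam_bounds by (intro halpern_step_sq_dist_le) auto
    also have "\<dots> \<le> (1 - lam k) * (norm (x k - p))\<^sup>2 + lam k * (2 * inner (u - p) (x (Suc k) - p))"
      using lam_bounds[of k] dist_fixed_point_le[OF iterate_in p(1)]
      by (intro add_right_mono mult_left_mono power_mono) auto
    finally show "(norm (x (Suc k) - p))\<^sup>2
        \<le> (1 - lam k) * (norm (x k - p))\<^sup>2 + lam k * (2 * inner (u - p) (x (Suc k) - p)) + 0"
      by simp
  next
    fix e :: real
    assume "0 < e"
    then have "\<forall>\<^sub>F k in sequentially. inner (u - p) (x k - p) \<le> e / 2"
      by (intro limsup_inner_le[OF t c p(2)]) simp
    then show "\<forall>\<^sub>F k in sequentially. 2 * inner (u - p) (x (Suc k) - p) \<le> e"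
      unfolding eventually_sequentially_Suc[of "\<lambda>k. 2 * inner (u - p) (x k - p) \<le> e"]
      by (rule eventually_mono) simp
  qed (use lam_bounds steering in \<open>auto simp: steering_def\<close>)
  then have "(\<lambda>k. sqrt ((norm (x k - p))\<^sup>2)) \<longlonglongrightarrow> sqrt 0"
    by (rule tendsto_real_sqrt)
  then have "(\<lambda>k. norm (x k - p)) \<longlonglongrightarrow> 0"
    by simp
  then show ?thesis
    unfolding p_def by (simp add: tendsto_norm_zero_iff LIM_zero_iff)
qed

end

section \<open>Firmly nonexpansive maps and their string operators\<close>

lemma firmly_nonexpansive_imp_nonexpansive:
  assumes "firmly_nonexpansive_on D T"
  shows "nonexpansive_on D T"
  unfolding nonexpansive_on_def
proof (intro ballI)
  fix x y
  assume "x \<in> D" "y \<in> D"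
  then have "(norm (T x - T y))\<^sup>2 \<le> inner (x - y) (T x - T y)"
    using assms unfolding firmly_nonexpansive_on_def by blast
  also have "\<dots> \<le> norm (x - y) * norm (T x - T y)"
    by (rule norm_cauchy_schwarz)
  finally show "norm (T x - T y) \<le> norm (x - y)"
    by (rule le_if_square_le_mult[OF norm_ge_zero norm_ge_zero])
qed

lemma firmly_nonexpansive_fixed_point_ineq:
  assumes "firmly_nonexpansive_on D T" "x \<in> D" "q \<in> D" "T q = q"
  shows "(norm (T x - q))\<^sup>2 + (norm (x - T x))\<^sup>2 \<le> (norm (x - q))\<^sup>2"
proof -
  have firm: "(norm (T x - q))\<^sup>2 \<le> inner (x - q) (T x - q)"
    using assms unfolding firmly_nonexpansive_on_def by metis
  have "(norm (x - q))\<^sup>2 = (norm ((x - T x) + (T x - q)))\<^sup>2"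
    by simp
  also have "\<dots> = (norm (x - T x))\<^sup>2 + 2 * inner (x - q) (T x - q) - (norm (T x - q))\<^sup>2"
    unfolding power2_norm_eq_inner by (simp add: inner_add_left inner_add_right inner_diff_left
        inner_diff_right inner_commute)
  finally show ?thesis
    using firm by linarith
qed

lemma norm_convex_combination_eq:
  fixes v :: "'b \<Rightarrow> 'a::real_normed_vector"
  assumes A: "finite A" "j \<in> A" and c: "\<And>i. i \<in> A \<Longrightarrow> 0 < c i" "sum c A = 1"
    and le: "\<And>i. i \<in> A \<Longrightarrow> norm (v i - q) \<le> R"
    and ge: "R \<le> norm ((\<Sum>i\<in>A. c i *\<^sub>R v i) - q)"
  shows "norm (v j - q) = R"
proof -
  have "(\<Sum>i\<in>A. c i *\<^sub>R v i) - q = (\<Sum>i\<in>A. c i *\<^sub>R (v i - q))"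
    using c(2) by (simp add: scaleR_diff_right sum_subtractf scaleR_left.sum[symmetric])
  then have "R \<le> (\<Sum>i\<in>A. c i * norm (v i - q))"
    using ge norm_sum[of "\<lambda>i. c i *\<^sub>R (v i - q)" A] c(1) by (simp add: less_imp_le)
  then have "(\<Sum>i\<in>A. c i * (R - norm (v i - q))) \<le> 0"
    using c(2) by (simp add: right_diff_distrib sum_subtractf sum_distrib_right[symmetric])
  moreover have "\<forall>i\<in>A. 0 \<le> c i * (R - norm (v i - q))"
    using c(1) le by (simp add: less_imp_le)
  ultimately have "\<forall>i\<in>A. c i * (R - norm (v i - q)) = 0"
    using sum_nonneg_eq_0_iff[OF A(1)] sum_nonneg[of A] by (metis (no_types, lifting) order.antisym)
  then show ?thesis
    using A(2) c(1)[OF A(2)] by fastforce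
qed


lemma string_op_in:
  assumes "\<And>i. i \<in> set t \<Longrightarrow> T i ` D \<subseteq> D" "y \<in> D"
  shows "string_op T t y \<in> D"
  using assms by (induction t arbitrary: y) auto

lemma string_op_fixed:
  assumes "\<And>i. i \<in> set t \<Longrightarrow> T i q = q"
  shows "string_op T t q = q"
  using assms by (induction t) auto

lemma nonexpansive_on_string_op:
  assumes "\<And>i. i \<in> set t \<Longrightarrow> T i ` D \<subseteq> D" "\<And>i. i \<in> set t \<Longrightarrow> nonexpansive_on D (T i)"
  shows "nonexpansive_on D (string_op T t)"
  using assms
proof (induction t)
  case Nil
  then show ?case by (simp add: nonexpansive_on_def)
next
  case (Cons i t)
  show ?case
    unfolding nonexpansive_on_def
  proof (intro ballI)
    fix y z
    assume "y \<in> D" "z \<in> D"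
    then have "norm (string_op T t (T i y) - string_op T t (T i z)) \<le> norm (T i y - T i z)"
      using Cons by (intro nonexpansive_onD) auto
    also have "\<dots> \<le> norm (y - z)"
      using Cons.prems(2) \<open>y \<in> D\<close> \<open>z \<in> D\<close> by (auto dest: nonexpansive_onD)
    finally show "norm (string_op T (i # t) y - string_op T (i # t) z) \<le> norm (y - z)"
      by simp
  qed
qed

text \<open>By firm nonexpansiveness each factor strictly approaches q unless it fixes its argument,
  and the remaining factors cannot move away from q again.\<close>

lemma string_op_dist_ge_imp_fixed:
  assumes maps: "\<And>i. i \<in> set t \<Longrightarrow> T i ` D \<subseteq> D"
    and firm: "\<And>i. i \<in> set t \<Longrightarrow> firmly_nonexpansive_on D (T i)"
    and q: "q \<in> D" "\<And>i. i \<in> set t \<Longrightarrow> T i q = q"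
    and y: "y \<in> D" "norm (y - q) \<le> norm (string_op T t y - q)"
  shows "\<forall>i\<in>set t. T i y = y"
  using maps firm q y
proof (induction t arbitrary: y)
  case Nil
  then show ?case by simp
next
  case (Cons i t)
  have "T i y \<in> D"
    using Cons.prems(1,5) by auto
  have "norm (y - q) \<le> norm (string_op T t (T i y) - string_op T t q)"
    using Cons.prems(4,6) string_op_fixed[of t T q] by simp
  also have "\<dots> \<le> norm (T i y - q)"
    using Cons.prems(1,2,3,4) \<open>T i y \<in> D\<close> string_op_fixed[of t T q]
    by (intro nonexpansive_onD[OF nonexpansive_on_string_op] firmly_nonexpansive_imp_nonexpansive)
      auto
  finally have "(norm (y - q))\<^sup>2 \<le> (norm (T i y - q))\<^sup>2"
    by (rule power_mono) simp
  moreover have "(norm (T i y - q))\<^sup>2 + (norm (y - T i y))\<^sup>2 \<le> (norm (y - q))\<^sup>2"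
    using Cons.prems by (intro firmly_nonexpansive_fixed_point_ineq) auto
  ultimately have "(norm (y - T i y))\<^sup>2 \<le> 0"
    by linarith
  then have "T i y = y"
    by simp
  moreover have "\<forall>j\<in>set t. T j y = y"
    using Cons.prems \<open>T i y = y\<close> by (intro Cons.IH) auto
  ultimately show ?case by simp
qed

lemma in_M_imp_pos: "in_M m \<Omega> w \<Longrightarrow> 0 < m"
proof -
  assume S: "in_M m \<Omega> w"
  then have "\<Omega> \<noteq> {}"
    unfolding in_M_def by auto
  then obtain t where "t \<in> \<Omega>" by blast
  then have "t \<noteq> []" "set t \<subseteq> {1..m}"
    using S unfolding in_M_def fit_def index_vector_def by auto
  then show "0 < m"
    by (cases t) auto
qed

lemma T_S_eq_convex_combination: "T_S T \<Omega> w = (\<lambda>y. \<Sum>t\<in>\<Omega>. w t *\<^sub>R string_op T t y)"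
  by (simp add: T_S_def fun_eq_iff)

context
  fixes m :: nat and \<Omega> :: "nat list set" and w :: "nat list \<Rightarrow> real"
  assumes S: "in_M m \<Omega> w"
begin

private lemma S_props:
  "finite \<Omega>" "\<And>t. t \<in> \<Omega> \<Longrightarrow> 0 < w t" "sum w \<Omega> = 1"
  "\<And>i. i \<in> {1..m} \<Longrightarrow> \<exists>t\<in>\<Omega>. i \<in> set t"
  using S unfolding in_M_def fit_def index_vector_def by auto

private lemma index_in: "t \<in> \<Omega> \<Longrightarrow> i \<in> set t \<Longrightarrow> i \<in> {1..m}"
  using S unfolding in_M_def fit_def index_vector_def by blast

private lemma string_op_fixed_of_index:
  "t \<in> \<Omega> \<Longrightarrow> (\<And>i. i \<in> {1..m} \<Longrightarrow> T i q = q) \<Longrightarrow> string_op T t q = q"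
  using index_in by (intro string_op_fixed) blast

lemma T_S_fixed:
  assumes "\<And>i. i \<in> {1..m} \<Longrightarrow> T i q = q"
  shows "T_S T \<Omega> w q = q"
proof -
  have "T_S T \<Omega> w q = (\<Sum>t\<in>\<Omega>. w t *\<^sub>R q)"
    unfolding T_S_def using string_op_fixed_of_index[where T = T and q = q, OF _ assms] by (intro sum.cong) auto
  then show ?thesis
    using S_props(3) by (simp add: scaleR_left.sum[symmetric])
qed

lemma T_S_in:
  assumes maps: "\<And>i. i \<in> {1..m} \<Longrightarrow> T i ` D \<subseteq> D" and "convex D" "y \<in> D"
  shows "T_S T \<Omega> w y \<in> D"
proof -
  have "string_op T t y \<in> D" if "t \<in> \<Omega>" for t
    using index_in[OF that] maps assms(3) by (intro string_op_in) blast+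
  then show ?thesis
    unfolding T_S_def using S_props assms(2) by (intro convex_sum) (auto intro: less_imp_le)
qed

context
  fixes D :: "'a::real_inner set" and T :: "nat \<Rightarrow> 'a \<Rightarrow> 'a"
  assumes maps: "\<And>i. i \<in> {1..m} \<Longrightarrow> T i ` D \<subseteq> D"
    and firm: "\<And>i. i \<in> {1..m} \<Longrightarrow> firmly_nonexpansive_on D (T i)"
begin

private lemma factor_props:
  assumes "t \<in> \<Omega>" "i \<in> set t"
  shows "T i ` D \<subseteq> D" "firmly_nonexpansive_on D (T i)"
  using index_in[OF assms] maps firm by blast+

private lemma nonexpansive_on_string_op_of_index: "t \<in> \<Omega> \<Longrightarrow> nonexpansive_on D (string_op T t)"
  using factor_props by (intro nonexpansive_on_string_op firmly_nonexpansive_imp_nonexpansive)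

lemma nonexpansive_on_T_S: "nonexpansive_on D (T_S T \<Omega> w)"
  unfolding T_S_eq_convex_combination using S_props nonexpansive_on_string_op_of_index
  by (intro nonexpansive_on_convex_combination) (auto intro: less_imp_le)

lemma T_S_dist_ge_imp_fixed:
  assumes q: "q \<in> D" "\<And>i. i \<in> {1..m} \<Longrightarrow> T i q = q"
    and y: "y \<in> D" "norm (y - q) \<le> norm (T_S T \<Omega> w y - q)"
  shows "\<forall>i\<in>{1..m}. T i y = y"
proof
  fix i
  assume "i \<in> {1..m}"
  then obtain t where t: "t \<in> \<Omega>" "i \<in> set t"
    using S_props(4) by blast
  have q_fixed: "string_op T s q = q" if "s \<in> \<Omega>" for s
    using string_op_fixed_of_index that q(2) .
  have "norm (string_op T s y - q) \<le> norm (y - q)" if "s \<in> \<Omega>" for s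
    using nonexpansive_onD[OF nonexpansive_on_string_op_of_index[OF that] y(1) q(1)] q_fixed[OF that]
    by simp
  then have "norm (string_op T t y - q) = norm (y - q)"
    using y(2) S_props t(1) unfolding T_S_def by (intro norm_convex_combination_eq) auto
  moreover have "\<And>j. j \<in> set t \<Longrightarrow> T j q = q"
    using index_in[OF t(1)] q(2) by blast
  ultimately have "\<forall>j\<in>set t. T j y = y"
    using factor_props[OF t(1)] q(1) y(1) by (intro string_op_dist_ge_imp_fixed) auto
  then show "T i y = y"
    using t(2) by blast
qed

end

end

lemma Fix_convex_combination_T_S:
  assumes maps: "\<And>i. i \<in> {1..m} \<Longrightarrow> T i ` D \<subseteq> D"
    and firm: "\<And>i. i \<in> {1..m} \<Longrightarrow> firmly_nonexpansive_on D (T i)"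
    and S: "\<And>r. r \<in> R \<Longrightarrow> in_M m (Om r) (W r)"
    and c: "finite R" "\<And>r. r \<in> R \<Longrightarrow> 0 < c r" "sum c R = 1"
    and F: "(\<Inter>i\<in>{1..m}. Fix D (T i)) \<noteq> {}"
  shows "Fix D (\<lambda>y. \<Sum>r\<in>R. c r *\<^sub>R T_S T (Om r) (W r) y) = (\<Inter>i\<in>{1..m}. Fix D (T i))"
    (is "Fix D ?V = ?F")
proof -
  have "R \<noteq> {}"
    using c(3) by auto
  then obtain r0 where "r0 \<in> R"
    by blast
  then have "0 < m"
    using S in_M_imp_pos by blast
  then have "1 \<in> {1..m}"
    by simp
  then have F_eq: "?F = {y \<in> D. \<forall>i\<in>{1..m}. T i y = y}"
    unfolding Fix_def by blast
  show ?thesis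
  proof (intro set_eqI iffI)
    fix y
    assume "y \<in> ?F"
    then have "T_S T (Om r) (W r) y = y" if "r \<in> R" for r
      by (intro T_S_fixed[OF S[OF that]]) (use F_eq in blast)
    then have "?V y = (\<Sum>r\<in>R. c r *\<^sub>R y)"
      by (intro sum.cong) auto
    also have "\<dots> = y"
      using c(3) by (simp add: scaleR_left.sum[symmetric])
    finally show "y \<in> Fix D ?V"
      using \<open>y \<in> ?F\<close> F_eq unfolding Fix_def by blast
  next
    fix y
    assume "y \<in> Fix D ?V"
    then have y: "y \<in> D" "?V y = y"
      unfolding Fix_def by auto
    obtain q where q: "q \<in> D" "\<And>i. i \<in> {1..m} \<Longrightarrow> T i q = q"
      using F F_eq by auto
    have "norm (T_S T (Om r) (W r) y - q) \<le> norm (y - q)" if "r \<in> R" for r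
      using nonexpansive_onD[OF nonexpansive_on_T_S[where D = D and T = T, OF S[OF that] maps firm]
          y(1) q(1)]
        T_S_fixed[where T = T and q = q, OF S[OF that] q(2)] by simp
    then have "norm (T_S T (Om r0) (W r0) y - q) = norm (y - q)"
      using \<open>r0 \<in> R\<close> c y(2) by (intro norm_convex_combination_eq) auto
    then show "y \<in> ?F"
      using T_S_dist_ge_imp_fixed[where D = D and T = T, OF S[OF \<open>r0 \<in> R\<close>] maps firm q y(1)]
        F_eq y(1) by auto
  qed
qed

theorem theorem6:
  fixes D :: "'a::{real_inner, complete_space} set"
    and T :: "nat \<Rightarrow> 'a \<Rightarrow> 'a"
    and m N :: nat
    and Om :: "nat \<Rightarrow> nat list set"
    and W :: "nat \<Rightarrow> nat list \<Rightarrow> real"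
    and what :: "nat \<Rightarrow> real"
    and lam :: "nat \<Rightarrow> real"
    and u x0 :: 'a
    and x :: "nat \<Rightarrow> 'a"
  assumes "D \<noteq> {}" "closed D" "convex D"
    and "\<And>i. i \<in> {1..m} \<Longrightarrow> T i ` D \<subseteq> D"
    and "\<And>i. i \<in> {1..m} \<Longrightarrow> firmly_nonexpansive_on D (T i)"
    and "(\<Inter>i\<in>{1..m}. Fix D (T i)) \<noteq> {}"
    and "N \<ge> 1"
    and "\<And>r. r \<in> {1..N} \<Longrightarrow> in_M m (Om r) (W r)"
    and "inj_on (\<lambda>r. (Om r, restrict (W r) (Om r))) {1..N}"
    and "\<And>r. r \<in> {1..N} \<Longrightarrow> what r > 0"
    and "(\<Sum>r=1..N. what r) = 1"
    and "steering lam"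
    and "u \<in> D" "x0 \<in> D"
    and "x 0 = x0"
    and "\<And>k. x (Suc k) = lam k *\<^sub>R u + (1 - lam k) *\<^sub>R (\<Sum>r=1..N. what r *\<^sub>R T_S T (Om r) (W r) (x k))"
  shows "x \<longlonglongrightarrow> metric_proj (\<Inter>i\<in>{1..m}. Fix D (T i)) u"
proof -
  note maps = assms(4) and firm = assms(5) and S = assms(8) and weights = assms(10,11)
  define V where "V y = (\<Sum>r=1..N. what r *\<^sub>R T_S T (Om r) (W r) y)" for y
  have V_eq: "V = (\<lambda>y. \<Sum>r\<in>{1..N}. what r *\<^sub>R T_S T (Om r) (W r) y)"
    by (simp add: V_def fun_eq_iff)
  have Fix_V: "Fix D V = (\<Inter>i\<in>{1..m}. Fix D (T i))"
    unfolding V_eq using weights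
    by (intro Fix_convex_combination_T_S[OF maps firm S _ _ _ assms(6)]) auto
  have "V y \<in> D" if "y \<in> D" for y
    unfolding V_def using weights T_S_in[OF S maps assms(3) that]
    by (intro convex_sum[OF _ assms(3)]) (auto intro: less_imp_le)
  then have "V ` D \<subseteq> D"
    by blast
  moreover have "nonexpansive_on D V"
    unfolding V_eq using weights nonexpansive_on_T_S[OF S maps firm]
    by (intro nonexpansive_on_convex_combination) (auto intro: less_imp_le)
  moreover have "Fix D V \<noteq> {}"
    using Fix_V assms(6) by simp
  moreover have "x 0 \<in> D" "\<And>k. x (Suc k) = lam k *\<^sub>R u + (1 - lam k) *\<^sub>R V (x k)"
    using assms(14-16) by (simp_all add: V_def)
  ultimately interpret halpern_iteration D V u lam x
    using assms(2,3,12,13) by unfold_locales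
  show ?thesis
    using tendsto_metric_proj Fix_V by simp
qed

end
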